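(* Let $n\geq 2$ and let $A\in SL(2,\mathbb{Z})$ be a hyperbolic matrix with an eigenvalue $\lambda>n$, inducing the Anosov automorphism $h$ of $\mathbb{T}^2=\mathbb{R}^2/\mathbb{Z}^2$. Then there is no homeomorphism $f$ of $\mathbb{T}^2$ such that $hfh^{-1}=f^n$ and the homomorphism $BS(1,n)=\langle a,b\mid aba^{-1}=b^n\rangle\to\mathrm{Homeo}(\mathbb{T}^2)$, $a\mapsto h$, $b\mapsto f$, is injective. *)

theory Defs
  imports "HOL-Analysis.Analysis"
begin

text \<open>The 2-torus R^2/Z^2, realised (homeomorphically) as S^1 x S^1 in C x C.\<close>
definition torus :: "(complex \<times> complex) set" where
  "torus = {(z, w). cmod z = 1 \<and> cmod w = 1}"

text \<open>The toral automorphism induced by the integer matrix [[a,b],[c,d]]: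
  (x,y) mod Z^2 maps to (a x + b y, c x + d y) mod Z^2; in multiplicative
  coordinates z = e^(2 pi i x), w = e^(2 pi i y).\<close>
definition torus_aut :: "int \<Rightarrow> int \<Rightarrow> int \<Rightarrow> int \<Rightarrow> complex \<times> complex \<Rightarrow> complex \<times> complex" where
  "torus_aut a b c d = (\<lambda>(z, w). (z powi a * w powi b, z powi c * w powi d))"

text \<open>Words in the generators a, b of BS(1,n) and their inverses
  (True = generator, False = its inverse).\<close>
datatype gen = GA | GB

type_synonym word = "(gen \<times> bool) list"

inductive bs_eq :: "nat \<Rightarrow> word \<Rightarrow> word \<Rightarrow> bool" for n :: nat where
  bs_refl: "bs_eq n u u"
| bs_sym: "bs_eq n u v \<Longrightarrow> bs_eq n v u"
| bs_trans: "bs_eq n u v \<Longrightarrow> bs_eq n v w \<Longrightarrow> bs_eq n u w"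
| bs_cancel: "bs_eq n (u @ [(x, e), (x, \<not> e)] @ v) (u @ v)"
| bs_rel: "bs_eq n (u @ [(GA, True), (GB, True), (GA, False)] @ v) (u @ replicate n (GB, True) @ v)"

fun eval_word :: "('x \<Rightarrow> 'x) \<Rightarrow> ('x \<Rightarrow> 'x) \<Rightarrow> ('x \<Rightarrow> 'x) \<Rightarrow> ('x \<Rightarrow> 'x) \<Rightarrow> word \<Rightarrow> 'x \<Rightarrow> 'x" where
  "eval_word h h' f f' [] = id"
| "eval_word h h' f f' ((g, e) # ws) =
     (case (g, e) of (GA, True) \<Rightarrow> h | (GA, False) \<Rightarrow> h' | (GB, True) \<Rightarrow> f | (GB, False) \<Rightarrow> f')
     \<circ> eval_word h h' f f' ws"

end

theory Submission
  imports Defs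
begin

text \<open>Lift \<open>f\<close> to a map \<open>F\<close> of the plane. Its action \<open>B\<close> on \<open>H\<^sub>1(T\<^sup>2) = \<int>\<^sup>2\<close> satisfies
  \<open>A B A\<^sup>-\<^sup>1 = B\<^sup>n\<close>; comparing the traces of \<open>B\<close> and \<open>B\<^sup>n\<close>, and using that the hyperbolic matrix
  \<open>A\<close> has no rational eigenvector, gives \<open>B\<^sup>1\<^sup>2 = 1\<close>. Hence \<open>G = F\<^sup>1\<^sup>2\<close> commutes with integer
  translations and still satisfies \<open>A G A\<^sup>-\<^sup>1 = G\<^sup>n + v\<close>. Along the unstable eigendirection of \<open>A\<close>
  conjugation multiplies displacements by \<open>lam > n\<close>, which forces the unstable displacement of \<open>G\<close>
  to be constant; after a power and an integer translation it vanishes. On the stable lines the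
  normalised map is an increasing homeomorphism at bounded distance from the identity, whose
  orbits cannot return towards their starting point, while conjugation by \<open>A\<close> contracts them.
  So some power \<open>f\<^sup>q\<close> is the identity, although \<open>b\<^sup>q \<noteq> 1\<close> in \<open>BS(1, n)\<close>.\<close>

section \<open>Integer \<open>2 \<times> 2\<close> matrices\<close>

text \<open>\<open>(a, b, c, d)\<close> stands for the matrix \<open>[[a, b], [c, d]]\<close>.\<close>
type_synonym imat = "int \<times> int \<times> int \<times> int"

fun mat_mul :: "imat \<Rightarrow> imat \<Rightarrow> imat" where
  "mat_mul (a, b, c, d) (e, f, g, h) = (a*e + b*g, a*f + b*h, c*e + d*g, c*f + d*h)"

definition mat_one :: imat where "mat_one = (1, 0, 0, 1)"

fun mat_pow :: "imat \<Rightarrow> nat \<Rightarrow> imat" where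
  "mat_pow M 0 = mat_one"
| "mat_pow M (Suc k) = mat_mul M (mat_pow M k)"

fun mat_trace :: "imat \<Rightarrow> int" where "mat_trace (a, b, c, d) = a + d"
fun mat_det :: "imat \<Rightarrow> int" where "mat_det (a, b, c, d) = a*d - b*c"
fun mat_adj :: "imat \<Rightarrow> imat" where "mat_adj (a, b, c, d) = (d, -b, -c, a)"
fun mat_neg :: "imat \<Rightarrow> imat" where "mat_neg (a, b, c, d) = (-a, -b, -c, -d)"

lemma mat_mul_assoc: "mat_mul (mat_mul A B) C = mat_mul A (mat_mul B C)"
  by (cases A; cases B; cases C) (simp add: algebra_simps)

lemma mat_mul_one [simp]: "mat_mul mat_one A = A" "mat_mul A mat_one = A"
  by (cases A; simp add: mat_one_def)+

lemma mat_pow_one [simp]: "mat_pow mat_one k = mat_one"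
  by (induction k) simp_all

lemma mat_pow_add: "mat_pow M (i + j) = mat_mul (mat_pow M i) (mat_pow M j)"
  by (induction i) (simp_all add: mat_mul_assoc)

lemma mat_pow_mult: "mat_pow M (i * j) = mat_pow (mat_pow M i) j"
  by (induction j) (simp_all add: mat_pow_add)

lemma mat_det_mul: "mat_det (mat_mul A B) = mat_det A * mat_det B"
  by (cases A; cases B) (simp add: algebra_simps)

lemma mat_mul_adj: "mat_mul A (mat_adj A) = (mat_det A, 0, 0, mat_det A)"
  by (cases A) (simp add: algebra_simps)

lemma mat_trace_conj: "mat_trace (mat_mul (mat_mul A B) (mat_adj A)) = mat_det A * mat_trace B"
  by (cases A; cases B) (simp add: algebra_simps)

lemma mat_neg_mul: "mat_mul (mat_neg A) B = mat_neg (mat_mul A B)" "mat_mul A (mat_neg B) = mat_neg (mat_mul A B)"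
  by (cases A; cases B; simp)+

lemma mat_neg_neg [simp]: "mat_neg (mat_neg A) = A"
  by (cases A) simp

lemma mat_trace_neg [simp]: "mat_trace (mat_neg A) = - mat_trace A"
  and mat_det_neg [simp]: "mat_det (mat_neg A) = mat_det A"
  by (cases A; simp)+

lemma mat_pow_neg: "mat_pow (mat_neg B) k = (if even k then mat_pow B k else mat_neg (mat_pow B k))"
  by (induction k) (auto simp: mat_neg_mul)

text \<open>Cayley--Hamilton, read off on traces.\<close>
lemma mat_trace_pow_rec:
  "mat_trace (mat_pow M (Suc (Suc k))) = mat_trace M * mat_trace (mat_pow M (Suc k)) - mat_det M * mat_trace (mat_pow M k)"
proof -
  obtain a b c d where M: "M = (a, b, c, d)" by (cases M)
  obtain p q r s where P: "mat_pow M k = (p, q, r, s)" by (cases "mat_pow M k")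
  have "mat_pow M (Suc k) = mat_mul M (p, q, r, s)" "mat_pow M (Suc (Suc k)) = mat_mul M (mat_mul M (p, q, r, s))"
    using P by simp_all
  then show ?thesis by (simp only: P) (simp add: M algebra_simps)
qed

text \<open>\<open>s\<close> below is the Lucas sequence \<open>V(t, d)\<close>; by \<open>mat_trace_pow_rec\<close>,
  \<open>k \<mapsto> mat_trace (mat_pow B k)\<close> is \<open>V(mat_trace B, mat_det B)\<close>.\<close>

lemma lucas_V_positive_increasing:
  fixes s :: "nat \<Rightarrow> int"
  assumes s0: "s 0 = 2" and s1: "s 1 = t" and rec: "\<And>k. s (Suc (Suc k)) = t * s (Suc k) + s k"
    and t: "t \<ge> 1" and k: "k \<ge> 1"
  shows "0 < s k \<and> s k < s (Suc k)"
proof -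
  have pos: "0 < s j \<and> 0 < s (Suc j)" for j
  proof (induction j)
    case (Suc j)
    then show ?case using rec[of j] t by (simp add: add_pos_pos)
  qed (use s0 s1 t in simp)
  obtain j where j: "k = Suc j" using k by (cases k) auto
  have "t * s k \<ge> s k" using t pos[of k] by simp
  then show ?thesis using rec[of j] pos[of j] pos[of k] unfolding j by linarith
qed

lemma lucas_V_abs_increasing:
  fixes s :: "nat \<Rightarrow> int"
  assumes s0: "s 0 = 2" and s1: "s 1 = t" and rec: "\<And>k. s (Suc (Suc k)) = t * s (Suc k) - d * s k"
    and d: "d = 1 \<or> d = -1" and t: "\<bar>t\<bar> \<ge> 3 \<or> (d = -1 \<and> t \<noteq> 0)" and k: "k \<ge> 1"
  shows "\<bar>s k\<bar> < \<bar>s (Suc k)\<bar>"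
proof (cases "\<bar>t\<bar> \<ge> 3")
  case True
  have "\<bar>s j\<bar> < \<bar>s (Suc j)\<bar>" for j
  proof (induction j)
    case (Suc j)
    have "\<bar>s (Suc (Suc j))\<bar> \<ge> \<bar>t\<bar> * \<bar>s (Suc j)\<bar> - \<bar>s j\<bar>"
      using rec[of j] d by (auto simp: abs_mult[symmetric] intro: order_trans[OF _ abs_triangle_ineq4])
    moreover have "\<bar>t\<bar> * \<bar>s (Suc j)\<bar> \<ge> 3 * \<bar>s (Suc j)\<bar>"
      using True by (intro mult_right_mono) auto
    ultimately show ?case using Suc by linarith
  qed (use s0 s1 True in simp)
  then show ?thesis .
next
  case False
  with t have d: "d = -1" and t0: "t \<noteq> 0" by auto
  define s' where "s' j = sgn t ^ j * s j" for j
  have rec': "s' (Suc (Suc j)) = \<bar>t\<bar> * s' (Suc j) + s' j" for j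
  proof -
    have "s' (Suc (Suc j)) = (t * sgn t) * (sgn t ^ Suc j * s (Suc j)) + (sgn t * sgn t) * s' j"
      using rec[of j] d by (simp add: s'_def algebra_simps)
    then show ?thesis using t0 by (simp add: abs_sgn s'_def)
  qed
  have "sgn t * t = \<bar>t\<bar>" by (simp add: abs_sgn mult.commute)
  then have "0 < s' k \<and> s' k < s' (Suc k)"
    using lucas_V_positive_increasing[of s' "\<bar>t\<bar>", OF _ _ rec'] s0 s1 t0 k by (simp add: s'_def)
  moreover have "\<bar>s' j\<bar> = \<bar>s j\<bar>" for j using t0 by (simp add: s'_def abs_mult power_abs)
  ultimately show ?thesis by (metis abs_of_pos order.strict_trans)
qed

lemma lucas_V_abs_neq:
  fixes s :: "nat \<Rightarrow> int"
  assumes "s 0 = 2" "s 1 = t" "\<And>k. s (Suc (Suc k)) = t * s (Suc k) - d * s k"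
    and "d = 1 \<or> d = -1" and "\<bar>t\<bar> \<ge> 3 \<or> (d = -1 \<and> t \<noteq> 0)" and "n \<ge> 2"
  shows "\<bar>s n\<bar> \<noteq> \<bar>s 1\<bar>"
proof -
  have "\<bar>s (Suc 0)\<bar> < \<bar>s (Suc (n - 1))\<bar>"
    using lift_Suc_mono_less[of "\<lambda>k. \<bar>s (Suc k)\<bar>" 0 "n - 1"]
      lucas_V_abs_increasing[OF assms(1-5)] assms(6) by simp
  then show ?thesis using assms(6) by simp
qed

lemma hyperbolic_char_form_root:
  fixes P Q T :: int
  assumes "P^2 - T*P*Q + Q^2 = 0" "\<bar>T\<bar> > 2"
  shows "Q = 0"
proof (rule ccontr)
  assume "Q \<noteq> 0"
  then obtain g P' Q' where g: "g \<noteq> 0" "P = g * P'" "Q = g * Q'" "coprime P' Q'"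
    by (metis gcd_coprime_exists gcd_eq_0_iff mult.commute)
  have "g^2 * (P'^2 - T*P'*Q' + Q'^2) = 0"
    using assms(1) g by (simp add: algebra_simps power2_eq_square)
  with g(1) have e: "P'^2 - T*P'*Q' + Q'^2 = 0" by simp
  have "P'^2 = Q' * (T*P' - Q')" using e by (simp add: algebra_simps power2_eq_square)
  then have "Q' dvd P'^2" by (rule dvdI)
  with g(4) have q1: "\<bar>Q'\<bar> = 1"
    by (meson coprime_absorb_right coprime_def coprime_power_right_iff zdvd1_eq coprime_commute)
  have "Q'^2 = P' * (T*Q' - P')" using e by (simp add: algebra_simps power2_eq_square)
  then have "P' dvd Q'^2" by (rule dvdI)
  with g(4) have p1: "\<bar>P'\<bar> = 1"
    by (meson coprime_absorb_right coprime_def coprime_power_right_iff zdvd1_eq)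
  have "P'^2 = 1" "Q'^2 = 1"
    using p1 q1 abs_mult_self_eq[of P'] abs_mult_self_eq[of Q'] by (simp_all add: power2_eq_square)
  with e have "T * P' * Q' = 2" by simp
  then have "\<bar>T\<bar> * \<bar>P'\<bar> * \<bar>Q'\<bar> = 2" by (metis abs_mult abs_numeral)
  with p1 q1 assms(2) show False by simp
qed

text \<open>The hypothesis says that \<open>A (x1, x2)\<close> is parallel to the integer vector \<open>(x1, x2)\<close>.\<close>
lemma hyperbolic_no_int_eigenvector:
  fixes a b c d x1 x2 :: int
  assumes "a*d - b*c = 1" "\<bar>a + d\<bar> > 2" "(x1, x2) \<noteq> (0, 0)"
    and par: "x1 * (c*x1 + d*x2) = x2 * (a*x1 + b*x2)"
  shows False
proof (cases "x1 = 0")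
  case False
  define P where "P = a*x1 + b*x2"
  have "P^2 - (a+d)*P*x1 + x1^2 = x1 * (x1 * (1 - (a*d - b*c)))"
    using par unfolding P_def by (simp add: algebra_simps power2_eq_square) algebra
  with assms(1) have "P^2 - (a+d)*P*x1 + x1^2 = 0" by simp
  with hyperbolic_char_form_root[OF _ assms(2)] False show False by blast
next
  case True
  with assms(3) par have x2: "x2 \<noteq> 0" and "b = 0" by auto
  define P where "P = c*x1 + d*x2"
  have "P^2 - (a+d)*P*x2 + x2^2 = x2 * (x2 * (1 - (a*d - b*c)))"
    using True \<open>b = 0\<close> unfolding P_def by (simp add: algebra_simps power2_eq_square)
  with assms(1) have "P^2 - (a+d)*P*x2 + x2^2 = 0" by simp
  with hyperbolic_char_form_root[OF _ assms(2)] x2 show False by blast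
qed

lemma unipotent_mat_pow:
  fixes p q r s :: int
  assumes "p * s - q*r = 1" "p + s = 2"
  shows "mat_pow (p, q, r, s) k = (1 + int k*(p-1), int k*q, int k*r, 1 + int k*(s-1))"
proof (induction k)
  case (Suc k)
  have "q*r = 2*p - p*p - 1" "s = 2 - p" using assms by algebra+
  then show ?case unfolding mat_pow.simps Suc.IH by simp algebra
qed (simp add: mat_one_def)

lemma unipotent_mat_trace_pow:
  assumes "mat_det C = 1" "mat_trace C = 2"
  shows "mat_trace (mat_pow C k) = 2"
proof -
  obtain p q r s where C: "C = (p, q, r, s)" by (cases C)
  with assms have pq: "p * s - q*r = 1" "p + s = 2" by simp_all
  have "mat_trace (mat_pow C k) = 2 + int k * (p + s - 2)"
    unfolding C unipotent_mat_pow[OF pq] by (simp add: algebra_simps)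
  with \<open>p + s = 2\<close> show ?thesis by simp
qed

text \<open>Writing \<open>B = 1 + N\<close> with \<open>N\<^sup>2 = 0\<close>, the relation becomes \<open>A N = n N A\<close>, so \<open>A\<close> preserves
  the rational line \<open>ker N\<close>, which a hyperbolic matrix cannot do unless \<open>N = 0\<close>.\<close>
lemma parabolic_eq_one_of_conj:
  assumes dA: "mat_det A = 1" and tA: "\<bar>mat_trace A\<bar> > 2"
    and rel: "mat_mul A B = mat_mul (mat_pow B n) A"
    and dB: "mat_det B = 1" and tB: "mat_trace B = 2" and n: "n \<ge> 1"
  shows "B = mat_one"
proof (rule ccontr)
  assume B1: "B \<noteq> mat_one"
  obtain a b c d where A: "A = (a, b, c, d)" by (cases A)
  obtain p q r s where B: "B = (p, q, r, s)" by (cases B)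
  define e where "e = p - 1"
  have trdet: "p + s = 2" "p * s - q*r = 1" using dB tB B by simp_all
  then have s: "s = 1 - e" by (simp add: e_def)
  have "e*e + q*r = p * (p + s - 2)" using trdet(2) by (simp add: e_def algebra_simps)
  with trdet(1) have efr: "e*e + q*r = 0" by simp
  have "mat_mul (a, b, c, d) (p, q, r, s) = mat_mul (1 + int n*(p-1), int n*q, int n*r, 1 + int n*(s-1)) (a, b, c, d)"
    using rel unipotent_mat_pow[of p s q r n] dB tB by (simp add: A B)
  then have E1: "a*e + b*r = int n*(e*a + q*c)" and E2: "a*q - b*e = int n*(e*b + q*d)"
    and E4: "c*q - d*e = int n*(r*b - e*d)"
    by (simp_all add: e_def s algebra_simps)
  have det1: "a*d - b*c = 1" and tr2: "\<bar>a + d\<bar> > 2" using dA tA A by simp_all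
  show False
  proof (cases "(e, q) = (0, 0)")
    case False
    have "int n * (e*(a*q - b*e) + q*(c*q - d*e)) = (a*e + b*r)*q - (a*q - b*e)*e"
      using E1 E2 by (simp add: algebra_simps) algebra
    also have "\<dots> = b*(e*e + q*r)" by (simp add: algebra_simps)
    finally have "e*(a*q - b*e) + q*(c*q - d*e) = 0" using efr n by simp
    then have "q * (c*q + d*(-e)) = (-e) * (a*q + b*(-e))" by (simp add: algebra_simps)
    then show False using hyperbolic_no_int_eigenvector[OF det1 tr2, of q "-e"] False by auto
  next
    case True
    with B1 B s have "r \<noteq> 0" by (auto simp: mat_one_def e_def)
    moreover have "int n * r * b = 0" using E4 True by (simp add: algebra_simps)
    ultimately have "b = 0" using n by simp
    then show False using hyperbolic_no_int_eigenvector[OF det1 tr2, of 0 1] by auto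
  qed
qed

lemma mat_trace_pow_eq_of_conj:
  assumes "mat_det A = 1" "mat_mul A B = mat_mul (mat_pow B n) A"
  shows "mat_trace (mat_pow B n) = mat_trace B"
proof -
  have "mat_mul A (mat_adj A) = mat_one" using mat_mul_adj[of A] assms(1) by (simp add: mat_one_def)
  then have "mat_mul (mat_mul A B) (mat_adj A) = mat_pow B n" by (simp add: assms(2) mat_mul_assoc)
  then show ?thesis using mat_trace_conj[of A B] assms(1) by simp
qed

lemma elliptic_mat_pow_12:
  assumes "mat_det B = -1 \<and> mat_trace B = 0 \<or> mat_det B = 1 \<and> \<bar>mat_trace B\<bar> \<le> 1"
  shows "mat_pow B 12 = mat_one"
proof -
  obtain p q r s where B: "B = (p, q, r, s)" by (cases B)
  have pow12: "mat_pow B 12 = mat_pow (mat_pow B 2) 6" "mat_pow B 12 = mat_pow (mat_pow B 3) 4"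
    "mat_pow B 12 = mat_pow (mat_pow (mat_pow B 2) 2) 3"
    using mat_pow_mult[of B 2 6] mat_pow_mult[of B 3 4] mat_pow_mult[of B 4 3] mat_pow_mult[of B 2 2]
    by simp_all
  have neg_one_pow: "mat_pow (mat_neg mat_one) k = (if even k then mat_one else mat_neg mat_one)" for k
    using mat_pow_neg[of mat_one k] by simp
  have "p + s = 0 \<or> p + s = 1 \<or> p + s = -1" using assms B by auto
  then consider "p * s - q*r = -1" "p + s = 0" | "p * s - q*r = 1" "p + s = 0"
    | "p * s - q*r = 1" "p + s = 1" | "p * s - q*r = 1" "p + s = -1"
    using assms B by auto
  then show ?thesis
  proof cases
    case 1
    then have "mat_pow B 2 = mat_one" by (simp add: B numeral_2_eq_2 mat_one_def) algebra
    then show ?thesis using pow12 by simp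
  next
    case 2
    then have "mat_pow B 2 = mat_neg mat_one" by (simp add: B numeral_2_eq_2 mat_one_def) algebra
    then show ?thesis using pow12 neg_one_pow[of 2] by simp
  next
    case 3
    then have "mat_pow B 3 = mat_neg mat_one" by (simp add: B numeral_3_eq_3 mat_one_def) algebra
    then show ?thesis using pow12 neg_one_pow[of 4] by simp
  next
    case 4
    then have "mat_pow B 3 = mat_one" by (simp add: B numeral_3_eq_3 mat_one_def) algebra
    then show ?thesis using pow12 by simp
  qed
qed

text \<open>The trace sequence of \<open>B\<close> takes the value \<open>mat_trace B\<close> again at index \<open>n\<close>, which
  excludes hyperbolic \<open>B\<close>; elliptic \<open>B\<close> have order dividing 12, and \<open>\<plusminus>\<close>parabolic \<open>B\<close> are
  \<open>\<plusminus>1\<close> by \<open>parabolic_eq_one_of_conj\<close>.\<close>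
lemma mat_pow_12_of_conj:
  assumes dA: "mat_det A = 1" and tA: "\<bar>mat_trace A\<bar> > 2"
    and rel: "mat_mul A B = mat_mul (mat_pow B n) A"
    and dB: "mat_det B = 1 \<or> mat_det B = -1" and n: "n \<ge> 2"
  shows "mat_pow B 12 = mat_one"
proof -
  have trn: "mat_trace (mat_pow B n) = mat_trace B" by (rule mat_trace_pow_eq_of_conj[OF dA rel])
  have "mat_trace (mat_pow B 0) = 2" by (simp add: mat_one_def)
  moreover have "mat_trace (mat_pow B 1) = mat_trace B" by simp
  ultimately
  have "\<not> (\<bar>mat_trace B\<bar> \<ge> 3 \<or> (mat_det B = -1 \<and> mat_trace B \<noteq> 0))"
    using lucas_V_abs_neq[of "\<lambda>k. mat_trace (mat_pow B k)", OF _ _ mat_trace_pow_rec dB _ n] trn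
    by auto
  then consider "mat_det B = -1 \<and> mat_trace B = 0 \<or> mat_det B = 1 \<and> \<bar>mat_trace B\<bar> \<le> 1"
    | "mat_det B = 1" "mat_trace B = 2" | "mat_det B = 1" "mat_trace B = -2"
    using dB by fastforce
  then show ?thesis
  proof cases
    case 1
    then show ?thesis by (rule elliptic_mat_pow_12)
  next
    case 2
    then show ?thesis using parabolic_eq_one_of_conj[OF dA tA rel] n by simp
  next
    case 3
    obtain C where B: "B = mat_neg C" by (metis mat_neg_neg)
    have dC: "mat_det C = 1" and tC: "mat_trace C = 2" using 3 B by simp_all
    have "mat_trace (mat_pow B n) = (if even n then 2 else -2)"
      using unipotent_mat_trace_pow[OF dC tC, of n] by (simp add: B mat_pow_neg)
    then have "odd n" using trn 3 by (auto split: if_splits)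
    then have "mat_mul A C = mat_mul (mat_pow C n) A"
      using rel by (metis B mat_neg_mul mat_neg_neg mat_pow_neg)
    then have "C = mat_one" using parabolic_eq_one_of_conj[OF dA tA _ dC tC] n by simp
    then show ?thesis using B mat_pow_neg[of mat_one 12] by simp
  qed
qed

section \<open>The covering map \<open>\<real>\<^sup>2 \<rightarrow> T\<^sup>2\<close> and lifts\<close>

type_synonym vec2 = "real \<times> real"

fun mat_vec :: "imat \<Rightarrow> vec2 \<Rightarrow> vec2" where
  "mat_vec (a, b, c, d) (x, y) = (of_int a * x + of_int b * y, of_int c * x + of_int d * y)"

fun mat_ivec :: "imat \<Rightarrow> int \<times> int \<Rightarrow> int \<times> int" where
  "mat_ivec (a, b, c, d) (i, j) = (a*i + b*j, c*i + d*j)"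

fun int_vec :: "int \<times> int \<Rightarrow> vec2" where
  "int_vec (i, j) = (of_int i, of_int j)"

lemma mat_vec_int_vec: "mat_vec M (int_vec k) = int_vec (mat_ivec M k)"
  by (cases M; cases k) simp

lemma mat_vec_mul: "mat_vec (mat_mul M N) x = mat_vec M (mat_vec N x)"
  by (cases M; cases N; cases x) (simp add: algebra_simps)

lemma mat_ivec_mul: "mat_ivec (mat_mul M N) k = mat_ivec M (mat_ivec N k)"
  by (cases M; cases N; cases k) (simp add: algebra_simps)

lemma mat_vec_add: "mat_vec M (x + y) = mat_vec M x + mat_vec M y"
  by (cases M; cases x; cases y) (simp add: algebra_simps)

lemma mat_vec_diff: "mat_vec M (x - y) = mat_vec M x - mat_vec M y"
  by (cases M; cases x; cases y) (simp add: algebra_simps)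

lemma continuous_on_mat_vec: "continuous_on S (mat_vec M)"
proof -
  obtain a b c d where M: "M = (a, b, c, d)" by (cases M)
  have "mat_vec M = (\<lambda>z. (of_int a * fst z + of_int b * snd z, of_int c * fst z + of_int d * snd z))"
    by (auto simp: M)
  then show ?thesis by (simp only:) (intro continuous_intros)
qed

lemma mat_vec_zero [simp]: "mat_vec M 0 = 0"
  by (cases M) (simp add: zero_prod_def)

lemma mat_vec_one [simp]: "mat_vec mat_one x = x"
  by (cases x) (simp add: mat_one_def)

lemma mat_eqI_int_vec:
  assumes "\<And>k. mat_vec M (int_vec k) = mat_vec N (int_vec k)"
  shows "M = N"
proof -
  obtain a b c d where M: "M = (a, b, c, d)" by (cases M)
  obtain a' b' c' d' where N: "N = (a', b', c', d')" by (cases N)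
  show ?thesis using assms[of "(1, 0)"] assms[of "(0, 1)"] by (simp add: M N)
qed

lemma int_vec_eq_zero_iff [simp]: "int_vec k = 0 \<longleftrightarrow> k = (0, 0)"
  by (cases k) (simp add: zero_prod_def)

lemma int_vec_uminus: "- int_vec k = int_vec (- fst k, - snd k)"
  by (cases k) simp

definition torus_proj :: "vec2 \<Rightarrow> complex \<times> complex" where
  "torus_proj x = (cis (2*pi * fst x), cis (2*pi * snd x))"

lemma torus_proj_in_torus [simp]: "torus_proj x \<in> torus"
  by (simp add: torus_proj_def torus_def)

lemma cis_2pi_eq_iff: "cis (2*pi*x) = cis (2*pi*y) \<longleftrightarrow> (\<exists>k::int. x = y + of_int k)"
  unfolding cis_conv_exp exp_eq
proof (intro ex_cong1)
  fix k :: int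
  have "\<i> * complex_of_real (2*pi*x) = \<i> * complex_of_real (2*pi*y) + of_int (2*k) * pi * \<i>
      \<longleftrightarrow> 2*pi * x = 2*pi * (y + of_int k)" (is "?lhs \<longleftrightarrow> _")
    by (simp add: complex_eq_iff algebra_simps)
  also have "\<dots> \<longleftrightarrow> x = y + of_int k" by simp
  finally show "?lhs \<longleftrightarrow> x = y + of_int k" .
qed

lemma torus_proj_eq_iff: "torus_proj x = torus_proj y \<longleftrightarrow> (\<exists>k. x = y + int_vec k)"
proof -
  have "(\<exists>k. x = y + int_vec k) \<longleftrightarrow> (\<exists>i j::int. fst x = fst y + of_int i \<and> snd x = snd y + of_int j)"
    by (auto simp: prod_eq_iff)
  then show ?thesis by (simp add: torus_proj_def cis_2pi_eq_iff)
qed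

lemma torus_proj_add_int_vec [simp]: "torus_proj (x + int_vec k) = torus_proj x"
  using torus_proj_eq_iff by blast

lemma range_torus_proj: "range torus_proj = torus"
proof (intro equalityI subsetI)
  fix p assume "p \<in> torus"
  then obtain z w where p: "p = (z, w)" "cmod z = 1" "cmod w = 1" by (auto simp: torus_def)
  then have "torus_proj (Arg z / (2*pi), Arg w / (2*pi)) = p"
    using rcis_cmod_Arg[of z] rcis_cmod_Arg[of w] by (simp add: torus_proj_def rcis_def)
  then show "p \<in> range torus_proj" by (metis rangeI)
qed auto

lemma continuous_on_torus_proj: "continuous_on S torus_proj"
  unfolding torus_proj_def by (intro continuous_intros)

lemma torus_aut_torus_proj: "torus_aut a b c d (torus_proj x) = torus_proj (mat_vec (a, b, c, d) x)"
proof -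
  have "cis t powi k = cis (of_int k * t)" for t k
    by (simp add: cis_conv_exp exp_power_int algebra_simps)
  then show ?thesis by (cases x) (simp add: torus_aut_def torus_proj_def cis_mult algebra_simps)
qed

lemma circle_map_lift:
  fixes g :: "vec2 \<Rightarrow> complex"
  assumes "continuous_on UNIV g" "\<And>x. cmod (g x) = 1"
  obtains G where "continuous_on UNIV G" "\<And>x. g x = cis (2*pi * G x)"
proof -
  have "g x \<noteq> 0" for x using assms(2)[of x] by auto
  then obtain L where L: "continuous_on UNIV L" "\<And>x. g x = exp (L x)"
    by (rule continuous_logarithm_on_simply_connected[OF assms(1)
          convex_imp_simply_connected[OF convex_UNIV] locally_path_connected_UNIV]) auto
  have "exp (Re (L x)) = 1" for x using assms(2)[of x] unfolding L(2) by (simp only: norm_exp_eq_Re)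
  then have "L x = \<i> * complex_of_real (2*pi * (Im (L x) / (2*pi)))" for x
    by (simp add: complex_eq_iff)
  then have "g x = cis (2*pi * (Im (L x) / (2*pi)))" for x
    by (metis L(2) cis_conv_exp)
  moreover have "continuous_on UNIV (\<lambda>x. Im (L x) / (2*pi))"
    by (intro continuous_intros L(1)) auto
  ultimately show ?thesis using that by blast
qed

lemma torus_map_lift:
  assumes "continuous_on torus f" "f ` torus \<subseteq> torus"
  obtains F where "continuous_on UNIV F" "\<And>x. torus_proj (F x) = f (torus_proj x)"
proof -
  have c: "continuous_on UNIV (\<lambda>x. f (torus_proj x))"
    using continuous_on_compose[OF continuous_on_torus_proj, of UNIV f] assms(1)
    by (simp add: range_torus_proj o_def)
  have t: "cmod (fst (f (torus_proj x))) = 1" "cmod (snd (f (torus_proj x))) = 1" for x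
  proof -
    have "f (torus_proj x) \<in> torus" using assms(2) torus_proj_in_torus[of x] by blast
    then show "cmod (fst (f (torus_proj x))) = 1" "cmod (snd (f (torus_proj x))) = 1"
      by (auto simp: torus_def)
  qed
  obtain G1 where G1: "continuous_on UNIV G1" "\<And>x. fst (f (torus_proj x)) = cis (2*pi * G1 x)"
    using circle_map_lift[OF continuous_on_fst[OF c] t(1)] by blast
  obtain G2 where G2: "continuous_on UNIV G2" "\<And>x. snd (f (torus_proj x)) = cis (2*pi * G2 x)"
    using circle_map_lift[OF continuous_on_snd[OF c] t(2)] by blast
  have "continuous_on UNIV (\<lambda>x. (G1 x, G2 x))" by (intro continuous_intros G1 G2)
  moreover have "torus_proj (G1 x, G2 x) = f (torus_proj x)" for x
    by (simp add: torus_proj_def G1(2)[symmetric] G2(2)[symmetric])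
  ultimately show ?thesis using that by blast
qed

lemma continuous_Ints_valued_constant:
  fixes \<phi> :: "'a::real_normed_vector \<Rightarrow> real"
  assumes "continuous_on UNIV \<phi>" "\<And>x. \<phi> x \<in> \<int>"
  shows "\<phi> x = \<phi> y"
proof -
  have "\<phi> constant_on UNIV"
  proof (rule continuous_discrete_range_constant[OF connected_UNIV assms(1)])
    fix x
    have "1 \<le> norm (\<phi> y - \<phi> x)" if "\<phi> y \<noteq> \<phi> x" for y
      using that assms(2) Ints_nonzero_abs_ge1[of "\<phi> y - \<phi> x"] by (simp add: Ints_diff)
    then show "\<exists>e>0. \<forall>y. y \<in> UNIV \<and> \<phi> y \<noteq> \<phi> x \<longrightarrow> e \<le> norm (\<phi> y - \<phi> x)"
      by (intro exI[of _ 1]) auto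
  qed
  then show ?thesis by (auto simp: constant_on_def)
qed

lemma lifts_differ_by_int_vec:
  fixes G1 G2 :: "vec2 \<Rightarrow> vec2"
  assumes "continuous_on UNIV G1" "continuous_on UNIV G2"
    and "\<And>x. torus_proj (G1 x) = torus_proj (G2 x)"
  obtains k where "\<And>x. G1 x = G2 x + int_vec k"
proof -
  have int: "fst (G1 x - G2 x) \<in> \<int> \<and> snd (G1 x - G2 x) \<in> \<int>" for x
  proof -
    obtain k where "G1 x = G2 x + int_vec k" using assms(3)[of x] torus_proj_eq_iff by blast
    then show ?thesis by (cases k) simp
  qed
  have "continuous_on UNIV (\<lambda>x. fst (G1 x - G2 x))" "continuous_on UNIV (\<lambda>x. snd (G1 x - G2 x))"
    by (intro continuous_intros assms(1,2))+
  then have "fst (G1 x - G2 x) = fst (G1 0 - G2 0)" "snd (G1 x - G2 x) = snd (G1 0 - G2 0)" for x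
    using continuous_Ints_valued_constant int by blast+
  then have const: "G1 x - G2 x = G1 0 - G2 0" for x by (simp add: prod_eq_iff)
  obtain k where "G1 0 = G2 0 + int_vec k" using assms(3)[of 0] torus_proj_eq_iff by blast
  then have "G1 x = G2 x + int_vec k" for x using const[of x] by (simp add: algebra_simps)
  then show ?thesis using that by blast
qed

lemma translation_int_multiple:
  fixes T :: "'a::real_vector \<Rightarrow> 'b::real_vector"
  assumes "\<And>x. T (x + a) = T x + b"
  shows "T (x + of_int i *\<^sub>R a) = T x + of_int i *\<^sub>R b"
proof -
  have "\<forall>x. T (x + of_int i *\<^sub>R a) = T x + of_int i *\<^sub>R b"
  proof (induction i rule: int_induct[where k = 0])
    case (step1 i)
    show ?case
    proof
      fix x
      have "T (x + of_int (i + 1) *\<^sub>R a) = T ((x + of_int i *\<^sub>R a) + a)" by (simp add: algebra_simps)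
      also have "\<dots> = T (x + of_int i *\<^sub>R a) + b" by (rule assms)
      also have "\<dots> = T x + of_int (i + 1) *\<^sub>R b" using step1.IH by (simp add: algebra_simps)
      finally show "T (x + of_int (i + 1) *\<^sub>R a) = T x + of_int (i + 1) *\<^sub>R b" .
    qed
  next
    case (step2 i)
    show ?case
    proof
      fix x
      have "T (x + of_int (i - 1) *\<^sub>R a) + b = T (x + of_int i *\<^sub>R a)"
        using assms[of "x + of_int (i - 1) *\<^sub>R a"] by (simp add: algebra_simps)
      then show "T (x + of_int (i - 1) *\<^sub>R a) = T x + of_int (i - 1) *\<^sub>R b"
        using step2.IH by (simp add: algebra_simps)
    qed
  qed simp
  then show ?thesis by blast
qed

text \<open>A lift commutes with deck translations up to the induced action on \<open>\<int>\<^sup>2 = H\<^sub>1(T\<^sup>2)\<close>.\<close>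
lemma lift_translation_matrix:
  assumes "continuous_on UNIV F" "\<And>x. torus_proj (F x) = f (torus_proj x)"
  obtains B where "\<And>x k. F (x + int_vec k) = F x + mat_vec B (int_vec k)"
proof -
  have "\<exists>l. \<forall>x. F (x + int_vec k) = F x + int_vec l" for k
  proof -
    have "continuous_on UNIV (\<lambda>x. F (x + int_vec k))"
      by (rule continuous_on_compose2[OF assms(1)]) (auto intro!: continuous_intros)
    from lifts_differ_by_int_vec[OF this assms(1)] show ?thesis by (metis assms(2) torus_proj_add_int_vec)
  qed
  then obtain \<Delta> where \<Delta>: "\<And>k x. F (x + int_vec k) = F x + int_vec (\<Delta> k)" by metis
  obtain p r where e1: "\<Delta> (1, 0) = (p, r)" by (cases "\<Delta> (1, 0)")
  obtain q s where e2: "\<Delta> (0, 1) = (q, s)" by (cases "\<Delta> (0, 1)")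
  have t1: "F (y + of_int i *\<^sub>R int_vec (1, 0)) = F y + of_int i *\<^sub>R int_vec (p, r)" for y i
    by (rule translation_int_multiple) (use \<Delta>[where k="(1, 0)"] e1 in simp)
  have t2: "F (y + of_int j *\<^sub>R int_vec (0, 1)) = F y + of_int j *\<^sub>R int_vec (q, s)" for y j
    by (rule translation_int_multiple) (use \<Delta>[where k="(0, 1)"] e2 in simp)
  have "F (x + int_vec (i, j)) = F x + mat_vec (p, q, r, s) (int_vec (i, j))" for x i j
  proof -
    have "x + int_vec (i, j) = (x + of_int i *\<^sub>R int_vec (1, 0)) + of_int j *\<^sub>R int_vec (0, 1)"
      by (simp add: prod_eq_iff)
    then have "F (x + int_vec (i, j)) = F x + of_int i *\<^sub>R int_vec (p, r) + of_int j *\<^sub>R int_vec (q, s)"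
      by (simp only: t1 t2)
    then show ?thesis by (simp add: prod_eq_iff algebra_simps)
  qed
  then show ?thesis using that by (metis surj_pair)
qed

lemma continuous_on_funpow:
  fixes G :: "'a::topological_space \<Rightarrow> 'a"
  assumes "continuous_on UNIV G"
  shows "continuous_on UNIV (G ^^ j)"
proof (induction j)
  case (Suc j)
  then have "continuous_on UNIV (G \<circ> (G ^^ j))"
    by (intro continuous_on_compose) (auto intro: continuous_on_subset[OF assms])
  then show ?case by simp
qed simp

lemma torus_proj_funpow:
  assumes "\<And>x. torus_proj (F x) = f (torus_proj x)"
  shows "torus_proj ((F ^^ j) x) = (f ^^ j) (torus_proj x)"
  by (induction j) (simp_all add: assms)

lemma funpow_translation_matrix:
  assumes "\<And>x k. F (x + int_vec k) = F x + mat_vec B (int_vec k)"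
  shows "(F ^^ j) (x + int_vec k) = (F ^^ j) x + mat_vec (mat_pow B j) (int_vec k)"
proof (induction j)
  case (Suc j)
  then have "(F ^^ Suc j) (x + int_vec k) = F ((F ^^ j) x + int_vec (mat_ivec (mat_pow B j) k))"
    by (simp add: mat_vec_int_vec)
  also have "\<dots> = F ((F ^^ j) x) + mat_vec B (int_vec (mat_ivec (mat_pow B j) k))"
    by (rule assms)
  also have "\<dots> = (F ^^ Suc j) x + mat_vec (mat_pow B (Suc j)) (int_vec k)"
    by (simp add: mat_vec_int_vec[symmetric] mat_vec_mul)
  finally show ?case .
qed simp

lemma funpow_conj_on:
  assumes hh': "\<And>p. p \<in> S \<Longrightarrow> h (h' p) = p" and h'h: "\<And>p. p \<in> S \<Longrightarrow> h' (h p) = p"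
    and h': "\<And>p. p \<in> S \<Longrightarrow> h' p \<in> S" and f: "\<And>p. p \<in> S \<Longrightarrow> f p \<in> S"
    and rel: "\<And>p. p \<in> S \<Longrightarrow> h (f (h' p)) = (f ^^ n) p"
    and "p \<in> S"
  shows "h ((f ^^ m) (h' p)) = (f ^^ (n * m)) p"
  using \<open>p \<in> S\<close>
proof (induction m)
  case (Suc m)
  have fm: "(f ^^ j) q \<in> S" if "q \<in> S" for j q using that by (induction j) (auto intro: f)
  have "(f ^^ Suc m) (h' p) = f (h' (h ((f ^^ m) (h' p))))"
    using h'h[OF fm[OF h'[OF Suc.prems]]] by simp
  also have "h ((f ^^ m) (h' p)) = (f ^^ (n * m)) p" by (rule Suc.IH[OF Suc.prems])
  finally have "h ((f ^^ Suc m) (h' p)) = (f ^^ n) ((f ^^ (n * m)) p)"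
    using rel[OF fm[OF Suc.prems]] by simp
  then show ?case by (simp add: funpow_add)
qed (simp add: hh')

lemma inj_on_funpow:
  assumes "inj_on f S" "f ` S \<subseteq> S"
  shows "inj_on (f ^^ j) S"
proof (induction j)
  case (Suc j)
  have "(f ^^ j) ` S \<subseteq> S" by (induction j) (use assms(2) in auto)
  then have "inj_on f ((f ^^ j) ` S)" using assms(1) by (rule inj_on_subset[rotated])
  with Suc.IH have "inj_on (f \<circ> (f ^^ j)) S" by (rule comp_inj_on)
  then show ?case by (simp add: o_def)
qed simp

lemma lift_inj:
  assumes lift: "\<And>x. torus_proj (F x) = f (torus_proj x)" and inj: "inj_on f torus"
    and per: "\<And>x k. F (x + int_vec k) = F x + int_vec k"
  shows "inj F"
proof (rule injI)
  fix x y assume "F x = F y"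
  then have "f (torus_proj x) = f (torus_proj y)" using lift by metis
  then have "torus_proj x = torus_proj y" using inj by (auto dest: inj_onD)
  then obtain k where k: "x = y + int_vec k" using torus_proj_eq_iff by blast
  with \<open>F x = F y\<close> per have "int_vec k = 0" by (simp add: zero_prod_def)
  with k show "x = y" by simp
qed

lemma homeomorphism_lift:
  assumes "homeomorphism torus torus f f'"
  obtains F B where "continuous_on UNIV F" "\<And>x. torus_proj (F x) = f (torus_proj x)"
    "\<And>x k. F (x + int_vec k) = F x + mat_vec B (int_vec k)" "mat_det B = 1 \<or> mat_det B = -1"
proof -
  have f: "continuous_on torus f" "f ` torus \<subseteq> torus" and f': "continuous_on torus f'" "f' ` torus \<subseteq> torus"
    and f'f: "\<And>p. p \<in> torus \<Longrightarrow> f' (f p) = p"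
    using assms unfolding homeomorphism_def by auto
  obtain F where F: "continuous_on UNIV F" "\<And>x. torus_proj (F x) = f (torus_proj x)"
    using torus_map_lift[OF f] by blast
  obtain B where FB: "\<And>x k. F (x + int_vec k) = F x + mat_vec B (int_vec k)"
    using lift_translation_matrix[OF F] by blast
  obtain F' where F': "continuous_on UNIV F'" "\<And>x. torus_proj (F' x) = f' (torus_proj x)"
    using torus_map_lift[OF f'] by blast
  obtain B' where FB': "\<And>x k. F' (x + int_vec k) = F' x + mat_vec B' (int_vec k)"
    using lift_translation_matrix[OF F'] by blast
  have "continuous_on UNIV (\<lambda>x. F' (F x))" by (rule continuous_on_compose2[OF F'(1) F(1)]) simp
  moreover have "torus_proj (F' (F x)) = torus_proj x" for x by (simp add: F(2) F'(2) f'f)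
  ultimately obtain k0 where k0: "\<And>x. F' (F x) = x + int_vec k0"
    using lifts_differ_by_int_vec[OF _ continuous_on_id] by metis
  have "mat_vec B' (mat_vec B (int_vec k)) = int_vec k" for k
    using k0[of "int_vec k"] k0[of 0] FB[of 0 k] FB'[of "F 0" "mat_ivec B k"]
    by (simp add: mat_vec_int_vec add.commute)
  then have "mat_vec (mat_mul B' B) (int_vec k) = mat_vec mat_one (int_vec k)" for k
    by (simp add: mat_vec_mul)
  then have "mat_mul B' B = mat_one" by (rule mat_eqI_int_vec)
  then have "mat_det B' * mat_det B = 1" using mat_det_mul[of B' B] by (simp add: mat_one_def)
  then have "mat_det B = 1 \<or> mat_det B = -1" using zmult_eq_1_iff by blast
  with F FB show ?thesis using that by blast
qed

section \<open>Maps of the plane and of the line\<close>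

lemma const_of_oscillation_expansion:
  fixes \<phi> :: "'a \<Rightarrow> real" and lam :: real
  assumes bounded: "\<And>x. \<bar>\<phi> x\<bar> \<le> M" and lam: "lam > real n"
    and split: "\<And>x y. \<exists>xs ys. lam * (\<phi> x - \<phi> y) = (\<Sum>i<n. \<phi> (xs i) - \<phi> (ys i))"
  shows "\<phi> x = \<phi> y"
proof -
  define S where "S = (\<lambda>(x, y). \<phi> x - \<phi> y) ` UNIV"
  define D where "D = Sup S"
  have "\<phi> x - \<phi> y \<le> 2 * M" for x y using bounded[of x] bounded[of y] by (simp add: abs_le_iff)
  then have bdd: "bdd_above S" by (auto simp: S_def intro!: bdd_aboveI[of _ "2 * M"])
  have le_D: "\<phi> x - \<phi> y \<le> D" for x y
    unfolding D_def by (rule cSup_upper[OF _ bdd]) (auto simp: S_def)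
  have "lam * (\<phi> x - \<phi> y) \<le> real n * D" for x y
  proof -
    obtain xs ys where "lam * (\<phi> x - \<phi> y) = (\<Sum>i<n. \<phi> (xs i) - \<phi> (ys i))" using split by blast
    also have "\<dots> \<le> (\<Sum>i<n. D)" by (intro sum_mono le_D)
    finally show ?thesis by simp
  qed
  with lam have "\<phi> x - \<phi> y \<le> real n * D / lam" for x y by (simp add: field_simps)
  then have "D \<le> real n * D / lam"
    unfolding D_def by (intro cSup_least) (auto simp: S_def D_def)
  with lam have "(lam - real n) * D \<le> 0" by (simp add: field_simps)
  with lam have "D \<le> 0" by (simp add: mult_le_0_iff)
  then show ?thesis using le_D[of x y] le_D[of y x] by linarith
qed

lemma periodic_continuous_bounded:
  fixes \<phi> :: "vec2 \<Rightarrow> real"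
  assumes "continuous_on UNIV \<phi>" "\<And>x k. \<phi> (x + int_vec k) = \<phi> x"
  obtains M where "\<And>x. \<bar>\<phi> x\<bar> \<le> M"
proof -
  have "compact (\<phi> ` ({0..1} \<times> {0..1}))"
    by (intro compact_continuous_image continuous_on_subset[OF assms(1)] compact_Times compact_Icc) auto
  then obtain M where M: "\<And>y. y \<in> \<phi> ` ({0..1} \<times> {0..1}) \<Longrightarrow> \<bar>y\<bar> \<le> M"
    by (metis compact_imp_bounded bounded_iff real_norm_def)
  have "\<bar>\<phi> x\<bar> \<le> M" for x
  proof -
    define k where "k = (\<lfloor>fst x\<rfloor>, \<lfloor>snd x\<rfloor>)"
    have "x - int_vec k \<in> {0..1} \<times> {0..1}"
      unfolding k_def by (auto simp: mem_Times_iff) linarith+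
    moreover have "\<phi> x = \<phi> (x - int_vec k)" using assms(2)[of "x - int_vec k" k] by simp
    ultimately show ?thesis using M by auto
  qed
  then show ?thesis using that by blast
qed

lemma funpow_conj:
  assumes "\<And>x. P (Q x) = x" "\<And>x. Q (P x) = x"
  shows "P ((\<Phi> ^^ j) (Q x)) = ((\<lambda>y. P (\<Phi> (Q y))) ^^ j) x"
proof (induction j arbitrary: x)
  case (Suc j)
  have "P ((\<Phi> ^^ Suc j) (Q x)) = P (\<Phi> (Q (P ((\<Phi> ^^ j) (Q x)))))" by (simp add: assms(2))
  then show ?case using Suc by simp
qed (simp add: assms)

lemma funpow_add_commute:
  fixes \<Phi> :: "'a::ab_group_add \<Rightarrow> 'a"
  assumes "\<And>x. \<Phi> (x + t) = \<Phi> x + t"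
  shows "(\<Phi> ^^ j) (x + t) = (\<Phi> ^^ j) x + t"
  by (induction j) (simp_all add: assms)

lemma funpow_plus_translation:
  fixes \<Phi> :: "'a::real_vector \<Rightarrow> 'a"
  assumes "\<And>x. \<Phi> (x + t) = \<Phi> x + t"
  shows "((\<lambda>y. \<Phi> y + t) ^^ j) x = (\<Phi> ^^ j) x + real j *\<^sub>R t"
proof (induction j)
  case (Suc j)
  have "\<Phi> (y + real j *\<^sub>R t) = \<Phi> y + real j *\<^sub>R t" for y
    using translation_int_multiple[of \<Phi> t t y "int j", OF assms] by simp
  then show ?case using Suc by (simp add: algebra_simps)
qed simp

lemma bounded_displacement_strict_mono:
  fixes \<phi> :: "real \<Rightarrow> real"
  assumes cont: "continuous_on UNIV \<phi>" and inj: "inj \<phi>" and bd: "\<And>r. \<bar>\<phi> r - r\<bar> \<le> M"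
  shows "strict_mono \<phi>"
proof -
  have "strict_mono_on UNIV \<phi> \<or> strict_antimono_on UNIV \<phi>"
    using injective_eq_monotone_map[of UNIV \<phi>] cont inj by simp
  moreover have "\<not> strict_antimono_on UNIV \<phi>"
  proof
    assume anti: "strict_antimono_on UNIV \<phi>"
    define R where "R = \<bar>\<phi> 0\<bar> + \<bar>M\<bar> + 1"
    have "\<phi> R < \<phi> 0" using anti by (rule monotone_onD) (auto simp: R_def)
    moreover have "\<phi> R \<ge> R - M" using bd[of R] by linarith
    ultimately show False unfolding R_def by linarith
  qed
  ultimately show ?thesis by (simp add: strict_mono_on_def strict_mono_def)
qed

lemma bounded_displacement_orbit_abs_ge:
  fixes \<phi> :: "real \<Rightarrow> real"
  assumes "continuous_on UNIV \<phi>" "inj \<phi>" "\<And>r. \<bar>\<phi> r - r\<bar> \<le> M"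
  shows "\<bar>\<phi> 0\<bar> \<le> \<bar>(\<phi> ^^ Suc j) 0\<bar>"
proof -
  have mono: "mono \<phi>" using bounded_displacement_strict_mono[OF assms] by (rule strict_mono_mono)
  show ?thesis
  proof (cases "\<phi> 0 \<ge> 0")
    case True
    have "\<phi> 0 \<le> (\<phi> ^^ Suc j) 0"
    proof (induction j)
      case (Suc j)
      with True show ?case using monoD[OF mono, of 0 "(\<phi> ^^ Suc j) 0"] by simp
    qed simp
    with True show ?thesis by simp
  next
    case False
    have "(\<phi> ^^ Suc j) 0 \<le> \<phi> 0"
    proof (induction j)
      case (Suc j)
      with False show ?case using monoD[OF mono, of "(\<phi> ^^ Suc j) 0" 0] by simp
    qed simp
    with False show ?thesis by simp
  qed
qed

section \<open>Maps conjugated to their powers by a hyperbolic automorphism\<close>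

lemma eigenvalue_char_eq:
  fixes a b c d :: int and l v1 v2 :: real
  assumes "(v1, v2) \<noteq> (0, 0)" "of_int a * v1 + of_int b * v2 = l * v1"
    "of_int c * v1 + of_int d * v2 = l * v2" "a*d - b*c = 1"
  shows "l^2 - of_int (a+d) * l + 1 = 0"
proof -
  have det: "real_of_int a * real_of_int d - real_of_int b * real_of_int c = 1"
    using assms(4) by (metis of_int_1 of_int_diff of_int_mult)
  have "(l^2 - of_int (a+d) * l + 1) * v1
      = (d - l) * (of_int a * v1 + of_int b * v2 - l * v1) - of_int b * (of_int c * v1 + of_int d * v2 - l * v2)"
    using det by (simp add: algebra_simps power2_eq_square)
  moreover have "(l^2 - of_int (a+d) * l + 1) * v2
      = (a - l) * (of_int c * v1 + of_int d * v2 - l * v2) - of_int c * (of_int a * v1 + of_int b * v2 - l * v1)"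
    using det by (simp add: algebra_simps power2_eq_square)
  ultimately show ?thesis using assms(1-3) by auto
qed

locale anosov_expanding =
  fixes a b c d :: int and lam :: real and n :: nat
  assumes det: "a*d - b*c = 1" and trace: "\<bar>a + d\<bar> > 2"
    and eigenvalue: "lam^2 - of_int (a+d) * lam + 1 = 0"
    and expanding: "real n < lam" and n_pos: "n \<ge> 1"
begin

definition A :: imat where "A = (a, b, c, d)"

definition mu :: real where "mu = of_int (a+d) - lam"

text \<open>\<open>(lam - d, b)\<close> and \<open>(mu - d, b)\<close> are left eigenvectors of \<open>A\<close>, for its eigenvalues \<open>lam\<close>
  and \<open>mu = 1 / lam\<close>.\<close>
definition ucoord :: "vec2 \<Rightarrow> real" where
  "ucoord x = (lam - of_int d) * fst x + of_int b * snd x"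

definition scoord :: "vec2 \<Rightarrow> real" where
  "scoord x = (mu - of_int d) * fst x + of_int b * snd x"

definition stable_dir :: vec2 where
  "stable_dir = (1 / (of_int b * (mu - lam))) *\<^sub>R (of_int b, of_int d - lam)"

lemma real_det: "real_of_int a * real_of_int d - real_of_int b * real_of_int c = 1"
  using det by (metis of_int_1 of_int_diff of_int_mult)

lemma lam_gt_one: "1 < lam"
  using expanding n_pos by linarith

lemma lam_mu: "lam * mu = 1"
  using eigenvalue unfolding mu_def by (simp add: algebra_simps power2_eq_square)

lemma mu_pos: "0 < mu" and mu_lt_one: "mu < 1"
proof -
  have "mu = 1 / lam" using lam_mu lam_gt_one by (simp add: field_simps)
  then show "0 < mu" "mu < 1" using lam_gt_one by auto
qed

lemma b_nonzero: "b \<noteq> 0"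
  using det trace zmult_eq_1_iff[of a d] by auto

lemma mat_mul_A_adj [simp]: "mat_mul A (mat_adj A) = mat_one" "mat_mul (mat_adj A) A = mat_one"
  using det by (simp_all add: A_def mat_one_def algebra_simps)

lemma mat_vec_A_adj [simp]: "mat_vec A (mat_vec (mat_adj A) x) = x" "mat_vec (mat_adj A) (mat_vec A x) = x"
  by (simp_all add: mat_vec_mul[symmetric])

lemma ucoord_A: "ucoord (mat_vec A x) = lam * ucoord x"
proof -
  obtain x1 x2 where x: "x = (x1, x2)" by (cases x)
  have "lam * lam = of_int (a+d) * lam - 1" using eigenvalue by (simp add: power2_eq_square algebra_simps)
  then show ?thesis unfolding x using real_det by (simp add: ucoord_def A_def algebra_simps) algebra
qed

lemma scoord_A: "scoord (mat_vec A x) = mu * scoord x"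
proof -
  obtain x1 x2 where x: "x = (x1, x2)" by (cases x)
  have "mu * mu = of_int (a+d) * mu - 1" using lam_mu by (simp add: mu_def algebra_simps)
  then show ?thesis unfolding x using real_det by (simp add: scoord_def A_def algebra_simps) algebra
qed

lemma ucoord_add: "ucoord (x + y) = ucoord x + ucoord y"
  and ucoord_diff: "ucoord (x - y) = ucoord x - ucoord y"
  and ucoord_scaleR: "ucoord (r *\<^sub>R x) = r * ucoord x"
  and scoord_add: "scoord (x + y) = scoord x + scoord y"
  and scoord_diff: "scoord (x - y) = scoord x - scoord y"
  and scoord_scaleR: "scoord (r *\<^sub>R x) = r * scoord x"
  by (simp_all add: ucoord_def scoord_def algebra_simps)

lemma continuous_on_ucoord [continuous_intros]:
  "continuous_on S F \<Longrightarrow> continuous_on S (\<lambda>x. ucoord (F x))"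
  unfolding ucoord_def by (intro continuous_intros)

lemma continuous_on_scoord [continuous_intros]:
  "continuous_on S F \<Longrightarrow> continuous_on S (\<lambda>x. scoord (F x))"
  unfolding scoord_def by (intro continuous_intros)

lemma coords_eq_zero_imp: "ucoord x = 0 \<Longrightarrow> scoord x = 0 \<Longrightarrow> x = 0"
proof -
  assume "ucoord x = 0" "scoord x = 0"
  moreover have "(lam - mu) * fst x = ucoord x - scoord x" by (simp add: ucoord_def scoord_def algebra_simps)
  moreover have "lam \<noteq> mu" using lam_gt_one mu_lt_one by simp
  ultimately have "fst x = 0" by simp
  with \<open>ucoord x = 0\<close> b_nonzero have "snd x = 0" by (simp add: ucoord_def)
  with \<open>fst x = 0\<close> show "x = 0" by (simp add: prod_eq_iff)
qed

lemma ucoord_stable_dir: "ucoord stable_dir = 0" and scoord_stable_dir: "scoord stable_dir = 1"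
proof -
  define v where "v = (real_of_int b, of_int d - lam)"
  have "ucoord v = 0" "scoord v = of_int b * (mu - lam)"
    by (simp_all add: v_def ucoord_def scoord_def algebra_simps)
  moreover have "of_int b * (mu - lam) \<noteq> 0" using b_nonzero lam_gt_one mu_lt_one by simp
  ultimately show "ucoord stable_dir = 0" "scoord stable_dir = 1"
    by (simp_all add: stable_dir_def v_def[symmetric] ucoord_scaleR scoord_scaleR)
qed

lemma stable_dir_nonzero: "stable_dir \<noteq> 0"
proof
  assume "stable_dir = 0"
  then have "scoord stable_dir = 0" by (simp add: scoord_def)
  with scoord_stable_dir show False by simp
qed

lemma ucoord_eq_zero_imp: "ucoord z = 0 \<Longrightarrow> z = scoord z *\<^sub>R stable_dir"
  using coords_eq_zero_imp[of "z - scoord z *\<^sub>R stable_dir"]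
  by (simp add: ucoord_diff scoord_diff ucoord_scaleR scoord_scaleR ucoord_stable_dir scoord_stable_dir)

lemma det_A_minus_n_nonzero: "(a - int n) * (d - int n) - b*c \<noteq> 0"
proof
  assume "(a - int n) * (d - int n) - b*c = 0"
  moreover have "N^2 - (a+d)*N*1 + 1^2 = (a - N) * (d - N) - b*c - (a*d - b*c) + 1" for N :: int
    by (simp add: algebra_simps power2_eq_square)
  ultimately have "int n ^ 2 - (a+d) * int n * 1 + 1^2 = 0" using det by simp
  from hyperbolic_char_form_root[OF this trace] show False by simp
qed

lemma ucoord_funpow_displacement:
  "ucoord ((G ^^ j) x - x) = (\<Sum>i<j. ucoord (G ((G ^^ i) x) - (G ^^ i) x))"
proof (induction j)
  case (Suc j)
  have "(G ^^ Suc j) x - x = (G ((G ^^ j) x) - (G ^^ j) x) + ((G ^^ j) x - x)" by simp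
  then show ?case using Suc by (simp only: ucoord_add) simp
qed (simp add: ucoord_def)

text \<open>Along the unstable direction the conjugacy multiplies displacements by \<open>lam\<close>, while
  \<open>G\<^sup>n\<close> adds up only \<open>n < lam\<close> displacements; so their oscillation must vanish.\<close>
lemma ucoord_displacement_const:
  assumes cont: "continuous_on UNIV G" and per: "\<And>x k. G (x + int_vec k) = G x + int_vec k"
    and rel: "\<And>x. mat_vec A (G (mat_vec (mat_adj A) x)) = (G ^^ n) x + int_vec v"
  shows "ucoord (G x - x) = ucoord (G y - y)"
proof -
  define \<phi> where "\<phi> x = ucoord (G x - x)" for x
  have "continuous_on UNIV \<phi>" unfolding \<phi>_def by (intro continuous_intros cont)
  moreover have "\<phi> (x + int_vec k) = \<phi> x" for x k by (simp add: \<phi>_def per)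
  ultimately obtain M where M: "\<And>x. \<bar>\<phi> x\<bar> \<le> M" using periodic_continuous_bounded by blast
  have lam_\<phi>: "lam * \<phi> x = (\<Sum>i<n. \<phi> ((G ^^ i) (mat_vec A x))) + ucoord (int_vec v)" for x
  proof -
    have "lam * \<phi> x = ucoord (mat_vec A (G x) - mat_vec A x)"
      by (simp add: \<phi>_def ucoord_A flip: mat_vec_diff)
    also have "mat_vec A (G x) = (G ^^ n) (mat_vec A x) + int_vec v"
      using rel[of "mat_vec A x"] by simp
    also have "ucoord (\<dots> - mat_vec A x) = ucoord ((G ^^ n) (mat_vec A x) - mat_vec A x) + ucoord (int_vec v)"
      by (simp add: ucoord_add ucoord_diff)
    finally show ?thesis by (simp add: ucoord_funpow_displacement \<phi>_def)
  qed
  have "\<exists>xs ys. lam * (\<phi> x - \<phi> y) = (\<Sum>i<n. \<phi> (xs i) - \<phi> (ys i))" for x y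
    by (intro exI[of _ "\<lambda>i. (G ^^ i) (mat_vec A x)"] exI[of _ "\<lambda>i. (G ^^ i) (mat_vec A y)"])
      (simp add: right_diff_distrib lam_\<phi> sum_subtractf)
  from const_of_oscillation_expansion[where \<phi> = \<phi>, OF M expanding this] show ?thesis by (simp add: \<phi>_def)
qed

lemma int_solution_A_minus_n:
  obtains q :: nat and W where "q > 0"
    "mat_vec A (int_vec W) - real n *\<^sub>R int_vec W = real q *\<^sub>R int_vec v"
proof -
  obtain v1 v2 where v: "v = (v1, v2)" by (cases v)
  define \<delta> where "\<delta> = (a - int n) * (d - int n) - b*c"
  have \<delta>: "\<delta> \<noteq> 0" using det_A_minus_n_nonzero by (simp add: \<delta>_def)
  \<comment> \<open>\<open>W = sgn \<delta> \<cdot> adj(A - n) v\<close>, so that \<open>(A - n) W = |\<delta>| v\<close>\<close>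
  define W1 where "W1 = sgn \<delta> * ((d - int n) * v1 - b * v2)"
  define W2 where "W2 = sgn \<delta> * (- c * v1 + (a - int n) * v2)"
  have "(a - int n) * W1 + b * W2 = \<bar>\<delta>\<bar> * v1" "c * W1 + (d - int n) * W2 = \<bar>\<delta>\<bar> * v2"
    by (simp_all add: W1_def W2_def \<delta>_def abs_sgn algebra_simps)
  then have "real_of_int ((a - int n) * W1 + b * W2) = real_of_int (\<bar>\<delta>\<bar> * v1)"
    "real_of_int (c * W1 + (d - int n) * W2) = real_of_int (\<bar>\<delta>\<bar> * v2)" by simp_all
  then have "mat_vec A (int_vec (W1, W2)) - real n *\<^sub>R int_vec (W1, W2) = real (nat \<bar>\<delta>\<bar>) *\<^sub>R int_vec v"
    by (simp add: A_def v prod_eq_iff algebra_simps)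
  with \<delta> show ?thesis using that[of "nat \<bar>\<delta>\<bar>" "(W1, W2)"] by simp
qed

lemma conj_funpow_minus_int_vec:
  assumes per: "\<And>x k. G (x + int_vec k) = G x + int_vec k"
    and rel: "\<And>x. mat_vec A (G (mat_vec (mat_adj A) x)) = (G ^^ n) x + int_vec v"
    and W: "mat_vec A (int_vec W) - real n *\<^sub>R int_vec W = real q *\<^sub>R int_vec v"
  shows "mat_vec A ((G ^^ q) (mat_vec (mat_adj A) x) - int_vec W) = ((\<lambda>y. (G ^^ q) y - int_vec W) ^^ n) x"
proof -
  have per_pow: "(G ^^ j) (y + int_vec k) = (G ^^ j) y + int_vec k" for j y k
    by (rule funpow_add_commute) (rule per)
  have "mat_vec A ((G ^^ q) (mat_vec (mat_adj A) x)) = ((\<lambda>y. mat_vec A (G (mat_vec (mat_adj A) y))) ^^ q) x"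
    by (rule funpow_conj) simp_all
  also have "\<dots> = ((\<lambda>y. (G ^^ n) y + int_vec v) ^^ q) x" by (simp add: rel)
  also have "\<dots> = (G ^^ (n * q)) x + real q *\<^sub>R int_vec v"
    by (simp add: funpow_plus_translation per_pow funpow_mult)
  finally have lhs: "mat_vec A ((G ^^ q) (mat_vec (mat_adj A) x) - int_vec W)
      = (G ^^ (n * q)) x + real q *\<^sub>R int_vec v - mat_vec A (int_vec W)"
    by (simp add: mat_vec_diff)
  have shift: "(G ^^ q) (y + - int_vec W) = (G ^^ q) y + - int_vec W" for y
    using per_pow[of q y "(- fst W, - snd W)"] by (simp add: int_vec_uminus)
  have "((\<lambda>y. (G ^^ q) y - int_vec W) ^^ n) x = ((\<lambda>y. (G ^^ q) y + - int_vec W) ^^ n) x" by simp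
  also have "\<dots> = ((G ^^ q) ^^ n) x + real n *\<^sub>R (- int_vec W)"
    by (rule funpow_plus_translation) (rule shift)
  also have "\<dots> = (G ^^ (n * q)) x - real n *\<^sub>R int_vec W" by (simp add: funpow_mult mult.commute)
  finally show ?thesis unfolding lhs using W by (simp add: algebra_simps)
qed

lemma ucoord_displacement_minus_int_vec:
  assumes u: "\<And>x. ucoord (G x - x) = u"
    and rel: "\<And>x. mat_vec A (G (mat_vec (mat_adj A) x)) = (G ^^ n) x + int_vec v"
    and W: "mat_vec A (int_vec W) - real n *\<^sub>R int_vec W = real q *\<^sub>R int_vec v"
  shows "ucoord ((G ^^ q) x - int_vec W - x) = 0"
proof -
  have pow: "ucoord ((G ^^ j) y - y) = real j * u" for j y
    by (simp add: ucoord_funpow_displacement u)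
  have "lam * u = ucoord (mat_vec A (G x) - mat_vec A x)"
    by (simp add: ucoord_A u flip: mat_vec_diff)
  also have "mat_vec A (G x) = (G ^^ n) (mat_vec A x) + int_vec v"
    using rel[of "mat_vec A x"] by simp
  also have "ucoord (\<dots> - mat_vec A x) = real n * u + ucoord (int_vec v)"
    using pow[of n "mat_vec A x"] by (simp add: ucoord_add ucoord_diff)
  finally have v: "ucoord (int_vec v) = (lam - real n) * u" by (simp add: algebra_simps)
  have "(lam - real n) * ucoord (int_vec W) = (lam - real n) * (real q * u)"
    using arg_cong[OF W, of ucoord] by (simp add: ucoord_diff ucoord_scaleR ucoord_A v algebra_simps)
  then have "ucoord (int_vec W) = real q * u" using expanding by simp
  then show ?thesis using pow[of q x] by (simp add: ucoord_diff ucoord_add algebra_simps)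
qed

lemma scoord_displacement_funpow_bound:
  assumes rel: "\<And>x. mat_vec A (H (mat_vec (mat_adj A) x)) = (H ^^ n) x"
    and bound: "\<And>x. \<bar>scoord (H x - x)\<bar> \<le> M"
  shows "\<bar>scoord ((H ^^ (n ^ m)) x - x)\<bar> \<le> mu ^ m * M"
proof (induction m arbitrary: x)
  case (Suc m)
  have conj: "(\<lambda>y. mat_vec A (H (mat_vec (mat_adj A) y))) = H ^^ n" using rel by (simp add: fun_eq_iff)
  have "mat_vec A ((H ^^ (n ^ m)) (mat_vec (mat_adj A) x))
      = ((\<lambda>y. mat_vec A (H (mat_vec (mat_adj A) y))) ^^ (n ^ m)) x"
    by (rule funpow_conj) simp_all
  also have "\<dots> = (H ^^ (n ^ Suc m)) x" by (simp add: conj funpow_mult)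
  finally have "(H ^^ (n ^ Suc m)) x - x
      = mat_vec A ((H ^^ (n ^ m)) (mat_vec (mat_adj A) x) - mat_vec (mat_adj A) x)"
    by (simp add: mat_vec_diff)
  then have "scoord ((H ^^ (n ^ Suc m)) x - x)
      = mu * scoord ((H ^^ (n ^ m)) (mat_vec (mat_adj A) x) - mat_vec (mat_adj A) x)"
    by (simp add: scoord_A)
  then show ?case using Suc[of "mat_vec (mat_adj A) x"] mu_pos by (simp add: abs_mult)
qed (use bound in simp)

lemma stable_line_restriction:
  assumes cont: "continuous_on UNIV H" and inj: "inj H"
    and unstable: "\<And>x. ucoord (H x - x) = 0" and bound: "\<And>x. \<bar>scoord (H x - x)\<bar> \<le> M"
  obtains \<phi> where "continuous_on UNIV \<phi>" "inj \<phi>" "\<And>r. \<bar>\<phi> r - r\<bar> \<le> M"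
    "\<And>j. (H ^^ j) x0 = x0 + (\<phi> ^^ j) 0 *\<^sub>R stable_dir"
proof -
  define \<phi> where "\<phi> r = scoord (H (x0 + r *\<^sub>R stable_dir) - x0)" for r
  have on_line: "H (x0 + r *\<^sub>R stable_dir) = x0 + \<phi> r *\<^sub>R stable_dir" for r
  proof -
    have "ucoord (H (x0 + r *\<^sub>R stable_dir) - x0) = 0"
      using unstable[of "x0 + r *\<^sub>R stable_dir"] by (simp add: ucoord_diff ucoord_add ucoord_scaleR ucoord_stable_dir)
    then have "H (x0 + r *\<^sub>R stable_dir) - x0 = \<phi> r *\<^sub>R stable_dir"
      unfolding \<phi>_def by (rule ucoord_eq_zero_imp)
    then show ?thesis by (simp add: algebra_simps)
  qed
  have "continuous_on UNIV (\<lambda>r. H (x0 + r *\<^sub>R stable_dir))"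
    by (rule continuous_on_compose2[OF cont]) (auto intro!: continuous_intros)
  then have "continuous_on UNIV \<phi>" unfolding \<phi>_def by (intro continuous_intros)
  moreover have "inj \<phi>"
  proof (rule injI)
    fix r r' assume "\<phi> r = \<phi> r'"
    then have "H (x0 + r *\<^sub>R stable_dir) = H (x0 + r' *\<^sub>R stable_dir)" by (simp add: on_line)
    with inj have "x0 + r *\<^sub>R stable_dir = x0 + r' *\<^sub>R stable_dir" by (rule injD)
    with stable_dir_nonzero show "r = r'" by simp
  qed
  moreover have "\<bar>\<phi> r - r\<bar> \<le> M" for r
    using bound[of "x0 + r *\<^sub>R stable_dir"]
    by (simp add: \<phi>_def scoord_diff scoord_add scoord_scaleR scoord_stable_dir)
  moreover have "(H ^^ j) x0 = x0 + (\<phi> ^^ j) 0 *\<^sub>R stable_dir" for j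
    by (induction j) (simp_all add: on_line[symmetric])
  ultimately show ?thesis using that by blast
qed

text \<open>On each stable line \<open>H\<close> acts as a homeomorphism at bounded distance from the identity, so
  orbits cannot approach their starting point; but conjugating by \<open>A\<close> contracts the stable
  displacement of \<open>H\<^bsup>n\<^sup>m\<^esup>\<close> by \<open>mu\<^sup>m\<close>.\<close>
lemma unstable_displacement_zero_imp_id:
  assumes cont: "continuous_on UNIV H" and inj: "inj H"
    and per: "\<And>x k. H (x + int_vec k) = H x + int_vec k"
    and unstable: "\<And>x. ucoord (H x - x) = 0"
    and rel: "\<And>x. mat_vec A (H (mat_vec (mat_adj A) x)) = (H ^^ n) x"
  shows "H x0 = x0"
proof (rule ccontr)
  assume moved: "H x0 \<noteq> x0"
  have "continuous_on UNIV (\<lambda>x. scoord (H x - x))" by (intro continuous_intros cont)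
  then obtain M where M: "\<And>x. \<bar>scoord (H x - x)\<bar> \<le> M"
    using periodic_continuous_bounded[of "\<lambda>x. scoord (H x - x)"] per by fastforce
  obtain \<phi> where "continuous_on UNIV \<phi>" "inj \<phi>" "\<And>r. \<bar>\<phi> r - r\<bar> \<le> M"
    and orbit: "\<And>j. (H ^^ j) x0 = x0 + (\<phi> ^^ j) 0 *\<^sub>R stable_dir"
    using stable_line_restriction[OF cont inj unstable M] by blast
  then have "\<bar>\<phi> 0\<bar> \<le> \<bar>(\<phi> ^^ Suc (n ^ m - 1)) 0\<bar>" for m
    by (intro bounded_displacement_orbit_abs_ge)
  also have "\<bar>(\<phi> ^^ Suc (n ^ m - 1)) 0\<bar> = \<bar>scoord ((H ^^ (n ^ m)) x0 - x0)\<bar>" for m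
    using n_pos by (simp add: orbit scoord_scaleR scoord_stable_dir)
  also have "\<dots> m \<le> mu ^ m * M" for m by (rule scoord_displacement_funpow_bound[OF rel M])
  finally have le: "\<bar>\<phi> 0\<bar> \<le> mu ^ m * M" for m .
  have "\<phi> 0 \<noteq> 0" using orbit[of 1] moved by auto
  then obtain m where "mu ^ m < \<bar>\<phi> 0\<bar> / (\<bar>M\<bar> + 1)"
    using real_arch_pow_inv[of "\<bar>\<phi> 0\<bar> / (\<bar>M\<bar> + 1)" mu] mu_lt_one by auto
  then have "mu ^ m * (\<bar>M\<bar> + 1) < \<bar>\<phi> 0\<bar>" by (simp add: field_simps)
  moreover have "mu ^ m * M \<le> mu ^ m * (\<bar>M\<bar> + 1)" using mu_pos by (intro mult_left_mono) auto
  ultimately show False using le[of m] by linarith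
qed

lemma funpow_eq_int_translation:
  assumes cont: "continuous_on UNIV G" and inj: "inj G"
    and per: "\<And>x k. G (x + int_vec k) = G x + int_vec k"
    and rel: "\<And>x. mat_vec A (G (mat_vec (mat_adj A) x)) = (G ^^ n) x + int_vec v"
  obtains q W where "q > 0" "\<And>x. (G ^^ q) x = x + int_vec W"
proof -
  obtain q W where q: "q > 0" and W: "mat_vec A (int_vec W) - real n *\<^sub>R int_vec W = real q *\<^sub>R int_vec v"
    by (rule int_solution_A_minus_n)
  define H where "H x = (G ^^ q) x - int_vec W" for x
  have "H x = x" for x
  proof (rule unstable_displacement_zero_imp_id)
    show "continuous_on UNIV H" unfolding H_def by (intro continuous_intros continuous_on_funpow cont)
    show "inj H" using inj_fn[OF inj, of q] by (auto simp: inj_def H_def)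
    show "H (x + int_vec k) = H x + int_vec k" for x k
      by (simp add: H_def funpow_add_commute[of G, OF per])
    show "ucoord (H x - x) = 0" for x
      unfolding H_def by (rule ucoord_displacement_minus_int_vec[OF _ rel W])
        (use ucoord_displacement_const[OF cont per rel] in blast)
    show "mat_vec A (H (mat_vec (mat_adj A) x)) = (H ^^ n) x" for x
      using conj_funpow_minus_int_vec[OF per rel W] by (simp add: H_def[abs_def])
  qed
  then have "(G ^^ q) x = x + int_vec W" for x by (simp add: H_def algebra_simps)
  with q show ?thesis using that by blast
qed

lemma torus_aut_A: "torus_aut a b c d (torus_proj x) = torus_proj (mat_vec A x)"
  and torus_aut_adj_A: "torus_aut d (-b) (-c) a (torus_proj x) = torus_proj (mat_vec (mat_adj A) x)"
  by (simp_all add: torus_aut_torus_proj A_def)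

lemma torus_aut_adj_in_torus: "p \<in> torus \<Longrightarrow> torus_aut d (-b) (-c) a p \<in> torus"
  by (auto simp flip: range_torus_proj simp: torus_aut_A torus_aut_adj_A)

lemma torus_aut_inverse:
  "p \<in> torus \<Longrightarrow> torus_aut a b c d (torus_aut d (-b) (-c) a p) = p"
  "p \<in> torus \<Longrightarrow> torus_aut d (-b) (-c) a (torus_aut a b c d p) = p"
  by (auto simp flip: range_torus_proj simp: torus_aut_A torus_aut_adj_A)

lemma lift_conj_relation:
  assumes cont: "continuous_on UNIV G" and lift: "\<And>x. torus_proj (G x) = g (torus_proj x)"
    and rel: "\<And>p. p \<in> torus \<Longrightarrow> torus_aut a b c d (g (torus_aut d (-b) (-c) a p)) = (g ^^ n) p"
  obtains v where "\<And>x. mat_vec A (G (mat_vec (mat_adj A) x)) = (G ^^ n) x + int_vec v"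
proof -
  have "continuous_on UNIV (\<lambda>x. mat_vec A (G (mat_vec (mat_adj A) x)))"
    by (intro continuous_on_compose2[OF continuous_on_mat_vec] continuous_on_compose2[OF cont]
        continuous_on_mat_vec) auto
  moreover have "torus_proj (mat_vec A (G (mat_vec (mat_adj A) x))) = torus_proj ((G ^^ n) x)" for x
    using rel[of "torus_proj x"]
    by (simp add: torus_aut_A[symmetric] torus_aut_adj_A[symmetric] lift torus_proj_funpow[of G g, OF lift])
  ultimately show ?thesis
    using lifts_differ_by_int_vec[OF _ continuous_on_funpow[OF cont]] that by metis
qed

lemma lift_conj_mat_relation:
  assumes FB: "\<And>x k. F (x + int_vec k) = F x + mat_vec B (int_vec k)"
    and rel: "\<And>x. mat_vec A (F (mat_vec (mat_adj A) x)) = (F ^^ n) x + int_vec v"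
  shows "mat_mul A B = mat_mul (mat_pow B n) A"
proof -
  have "mat_vec A (F (mat_vec (mat_adj A) (int_vec k)))
      = mat_vec A (F 0) + mat_vec (mat_mul A (mat_mul B (mat_adj A))) (int_vec k)" for k
    using FB[of 0 "mat_ivec (mat_adj A) k"] by (simp add: mat_vec_int_vec mat_vec_add mat_ivec_mul)
  moreover have "mat_vec A (F (mat_vec (mat_adj A) (int_vec k)))
      = mat_vec A (F 0) + mat_vec (mat_pow B n) (int_vec k)" for k
    using rel[of "int_vec k"] rel[of 0] funpow_translation_matrix[OF FB, of n 0 k] by simp
  ultimately have "mat_mul A (mat_mul B (mat_adj A)) = mat_pow B n"
    by (intro mat_eqI_int_vec) simp
  then have "mat_mul (mat_mul A (mat_mul B (mat_adj A))) A = mat_mul (mat_pow B n) A" by simp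
  then show ?thesis by (simp add: mat_mul_assoc)
qed

text \<open>The action of \<open>f\<close> on \<open>H\<^sub>1\<close> has order dividing 12.\<close>
lemma homeomorphism_power_lift_commuting:
  assumes n: "n \<ge> 2" and hom: "homeomorphism torus torus f f'"
    and rel: "\<And>p. p \<in> torus \<Longrightarrow> torus_aut a b c d (f (torus_aut d (-b) (-c) a p)) = (f ^^ n) p"
  obtains G where "continuous_on UNIV G" "inj G" "\<And>x k. G (x + int_vec k) = G x + int_vec k"
    "\<And>x. torus_proj (G x) = (f ^^ 12) (torus_proj x)"
proof -
  obtain F B where Fc: "continuous_on UNIV F" and Fl: "\<And>x. torus_proj (F x) = f (torus_proj x)"
    and FB: "\<And>x k. F (x + int_vec k) = F x + mat_vec B (int_vec k)" and dB: "mat_det B = 1 \<or> mat_det B = -1"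
    using homeomorphism_lift[OF hom] by blast
  obtain v where "\<And>x. mat_vec A (F (mat_vec (mat_adj A) x)) = (F ^^ n) x + int_vec v"
    using lift_conj_relation[OF Fc Fl rel] by blast
  then have "mat_mul A B = mat_mul (mat_pow B n) A" by (rule lift_conj_mat_relation[OF FB])
  moreover have "mat_det A = 1" "\<bar>mat_trace A\<bar> > 2" using det trace by (simp_all add: A_def)
  ultimately have B12: "mat_pow B 12 = mat_one" using mat_pow_12_of_conj dB n by blast
  have Gl: "torus_proj ((F ^^ 12) x) = (f ^^ 12) (torus_proj x)" for x
    by (rule torus_proj_funpow[of F f, OF Fl])
  have Gper: "(F ^^ 12) (x + int_vec k) = (F ^^ 12) x + int_vec k" for x k
    unfolding funpow_translation_matrix[OF FB] B12 by simp
  have "inj_on f torus" using hom by (metis homeomorphism_apply1 inj_on_inverseI)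
  then have "inj_on (f ^^ 12) torus"
    using hom by (intro inj_on_funpow) (auto simp: homeomorphism_def)
  then have "inj (F ^^ 12)" by (rule lift_inj[OF Gl _ Gper])
  with continuous_on_funpow[OF Fc] Gper Gl show ?thesis using that by blast
qed

lemma torus_homeomorphism_periodic:
  assumes n: "n \<ge> 2" and hom: "homeomorphism torus torus f f'"
    and rel: "\<And>p. p \<in> torus \<Longrightarrow> torus_aut a b c d (f (torus_aut d (-b) (-c) a p)) = (f ^^ n) p"
  obtains q where "q > 0" "\<And>p. p \<in> torus \<Longrightarrow> (f ^^ q) p = p"
proof -
  obtain G where Gc: "continuous_on UNIV G" and Ginj: "inj G"
    and Gper: "\<And>x k. G (x + int_vec k) = G x + int_vec k"
    and Gl: "\<And>x. torus_proj (G x) = (f ^^ 12) (torus_proj x)"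
    using homeomorphism_power_lift_commuting[OF n hom rel] by blast
  have "torus_aut a b c d ((f ^^ 12) (torus_aut d (-b) (-c) a p)) = ((f ^^ 12) ^^ n) p" if "p \<in> torus" for p
    using funpow_conj_on[OF torus_aut_inverse torus_aut_adj_in_torus _ rel that, of 12] hom
    by (auto simp: homeomorphism_def funpow_mult mult.commute)
  then obtain v where "\<And>x. mat_vec A (G (mat_vec (mat_adj A) x)) = (G ^^ n) x + int_vec v"
    using lift_conj_relation[OF Gc Gl] by blast
  then obtain q W where q: "q > 0" and GqW: "\<And>x. (G ^^ q) x = x + int_vec W"
    using funpow_eq_int_translation[OF Gc Ginj Gper] by blast
  have "(f ^^ (12 * q)) (torus_proj x) = torus_proj x" for x
    using torus_proj_funpow[of G "f ^^ 12", OF Gl, of q x] GqW[of x] by (simp add: funpow_mult)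
  then have "(f ^^ (12 * q)) p = p" if "p \<in> torus" for p using that by (auto simp flip: range_torus_proj)
  with q show ?thesis using that[of "12 * q"] by simp
qed

end

section \<open>The Baumslag--Solitar group\<close>

lemma eval_word_append:
  "eval_word h h' f f' (u @ w) = eval_word h h' f f' u \<circ> eval_word h h' f f' w"
  by (induction u) (auto simp: o_assoc)

lemma eval_word_replicate_b: "eval_word h h' f f' (replicate N (GB, True)) = f ^^ N"
  by (induction N) auto

definition affine_rep :: "nat \<Rightarrow> word \<Rightarrow> real \<Rightarrow> real" where
  "affine_rep n = eval_word (\<lambda>x. real n * x) (\<lambda>x. x / real n) (\<lambda>x. x + 1) (\<lambda>x. x - 1)"

lemma affine_rep_replicate_b: "affine_rep n (replicate N (GB, True)) = (\<lambda>x. x + real N)"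
proof -
  have "((\<lambda>x::real. x + 1) ^^ N) = (\<lambda>x. x + real N)"
    by (induction N) (auto simp: fun_eq_iff)
  then show ?thesis by (simp add: affine_rep_def eval_word_replicate_b)
qed

lemma affine_rep_append: "affine_rep n (u @ w) = affine_rep n u \<circ> affine_rep n w"
  by (simp add: affine_rep_def eval_word_append)

lemma affine_rep_bs_eq:
  assumes "bs_eq n u w" "n \<ge> 1"
  shows "affine_rep n u = affine_rep n w"
  using assms(1)
proof (induction rule: bs_eq.induct)
  case (bs_cancel u x e v)
  have "affine_rep n [(x, e), (x, \<not> e)] = id"
    using assms(2) by (cases x; cases e) (auto simp: affine_rep_def fun_eq_iff)
  then show ?case by (simp only: affine_rep_append) simp
next
  case (bs_rel u v)
  have "affine_rep n [(GA, True), (GB, True), (GA, False)] = affine_rep n (replicate n (GB, True))"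
    using assms(2) by (simp add: affine_rep_replicate_b) (simp add: affine_rep_def fun_eq_iff field_simps)
  then show ?case by (simp only: affine_rep_append)
qed auto

lemma not_bs_eq_b_power:
  assumes "N > 0" "n \<ge> 1"
  shows "\<not> bs_eq n (replicate N (GB, True)) []"
proof
  assume "bs_eq n (replicate N (GB, True)) []"
  then have "affine_rep n (replicate N (GB, True)) 0 = affine_rep n [] 0"
    using affine_rep_bs_eq assms(2) by metis
  with assms(1) show False by (simp add: affine_rep_replicate_b, simp add: affine_rep_def)
qed

theorem mainTheorem15:
  fixes n :: nat and a b c d :: int
  assumes "n \<ge> 2"
    and "a * d - b * c = 1"
    and "\<bar>a + d\<bar> > 2"
    and "\<exists>(l::real) v1 v2. (v1, v2) \<noteq> (0, 0) \<and> of_int a * v1 + of_int b * v2 = l * v1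
            \<and> of_int c * v1 + of_int d * v2 = l * v2 \<and> l > real n"
  shows "\<not> (\<exists>f f'. homeomorphism torus torus f f'
           \<and> (\<forall>p\<in>torus. torus_aut a b c d (f (torus_aut d (-b) (-c) a p)) = (f ^^ n) p)
           \<and> (\<forall>w. (\<forall>p\<in>torus. eval_word (torus_aut a b c d) (torus_aut d (-b) (-c) a) f f' w p = p)
                   \<longrightarrow> bs_eq n w []))"
proof (intro notI, elim exE conjE)
  fix f f'
  assume hom: "homeomorphism torus torus f f'"
    and rel: "\<forall>p\<in>torus. torus_aut a b c d (f (torus_aut d (-b) (-c) a p)) = (f ^^ n) p"
    and faithful: "\<forall>w. (\<forall>p\<in>torus. eval_word (torus_aut a b c d) (torus_aut d (-b) (-c) a) f f' w p = p)
                   \<longrightarrow> bs_eq n w []"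
  obtain l v1 v2 where "(v1, v2) \<noteq> (0, 0)" "of_int a * v1 + of_int b * v2 = l * v1"
    "of_int c * v1 + of_int d * v2 = l * v2" and l: "l > real n"
    using assms(4) by blast
  then have "l^2 - of_int (a+d) * l + 1 = 0" using eigenvalue_char_eq assms(2) by blast
  then interpret anosov_expanding a b c d l n using assms(1-3) l by unfold_locales auto
  obtain q where q: "q > 0" and periodic: "\<And>p. p \<in> torus \<Longrightarrow> (f ^^ q) p = p"
    using torus_homeomorphism_periodic[OF assms(1) hom] rel by blast
  have "bs_eq n (replicate q (GB, True)) []"
    using faithful by (simp add: eval_word_replicate_b periodic)
  with not_bs_eq_b_power[OF q] assms(1) show False by simp
qed

end
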